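(* For $n\ge2$, \[R_n(x)=2(1+x)^{n-1}D_n\!\Big(\frac{x}{1+x}\Big)=2\sum_{i=0}^{\lfloor (n-1)/2\rfloor} d_{n,i}\,x^{i+1}(1+x)^{\,n-2-i},\] where $R_n(x)=\sum_{\pi\in\mathfrak S_n}x^{\mathrm{run}(\pi)}$ and $D_n(x)=\sum_{i=0}^{\lfloor (n-1)/2\rfloor}d_{n,i}x^{i+1}$.
   Context: For $\pi\in\mathfrak S_n$, $\mathrm{run}(\pi)$ is $1$ plus the number of $i\in\{2,\dots,n-1\}$ with $\pi_{i-1}<\pi_i>\pi_{i+1}$ or $\pi_{i-1}>\pi_i<\pi_{i+1}$. A descent of $\pi$ is an index $i\in[n-1]$ with $\pi_i>\pi_{i+1}$. For an index $i$, the $\pi_i$-factorization is $\pi=w_1w_2\pi_iw_4w_5$ where $w_2$ is the longest factor ending at position $i-1$ with all letters $>\pi_i$ and $w_4$ is the longest factor starting at position $i+1$ with all letters $>\pi_i$. $\pi\in\mathfrak S_n$ is an André permutation if (i) there is no $i\in\{2,\dots,n-1\}$ with $\pi_{i-1}>\pi_i>\pi_{i+1}$, (ii) $\pi_{n-1}<\pi_n$, and (iii) for every $i\in\{2,\dots,n-1\}$ with $\pi_{i-1}>\pi_i<\pi_{i+1}$, the maximum letter of $w_2$ is smaller than the maximum letter of $w_4$ in the $\pi_i$-factorization. $d_{n,i}$ is the number of André permutations in $\mathfrak S_n$ with exactly $i$ descents. *)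

theory Defs
  imports Complex_Main "HOL-Combinatorics.Multiset_Permutations"
begin

text \<open>Permutations of [n] are represented as lists (one-line notation) of the
  numbers 1..n. Positions are 1-indexed: the i-th letter is p ! (i - 1).\<close>

definition perms :: "nat \<Rightarrow> nat list set" where
  "perms n = permutations_of_set {1..n}"

definition letter :: "nat list \<Rightarrow> nat \<Rightarrow> nat" where
  "letter p i = p ! (i - 1)"

definition run :: "nat list \<Rightarrow> nat" where
  "run p = 1 + card {i \<in> {2..length p - 1}.
      (letter p (i-1) < letter p i \<and> letter p i > letter p (i+1)) \<or>
      (letter p (i-1) > letter p i \<and> letter p i < letter p (i+1))}"

definition des :: "nat list \<Rightarrow> nat" where
  "des p = card {i \<in> {1..length p - 1}. letter p i > letter p (i+1)}"

text \<open>Letters of w2 (longest factor ending at position i-1 with all letters > p_i)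
  and of w4 (longest factor starting at position i+1 with all letters > p_i).\<close>

definition w2_letters :: "nat list \<Rightarrow> nat \<Rightarrow> nat set" where
  "w2_letters p i = {letter p j | j. 1 \<le> j \<and> j < i \<and>
      (\<forall>k. j \<le> k \<and> k < i \<longrightarrow> letter p k > letter p i)}"

definition w4_letters :: "nat list \<Rightarrow> nat \<Rightarrow> nat set" where
  "w4_letters p i = {letter p j | j. i < j \<and> j \<le> length p \<and>
      (\<forall>k. i < k \<and> k \<le> j \<longrightarrow> letter p k > letter p i)}"

definition andre :: "nat list \<Rightarrow> bool" where
  "andre p \<longleftrightarrow>
     (\<not> (\<exists>i \<in> {2..length p - 1}. letter p (i-1) > letter p i \<and> letter p i > letter p (i+1))) \<and>
     letter p (length p - 1) < letter p (length p) \<and>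
     (\<forall>i \<in> {2..length p - 1}. letter p (i-1) > letter p i \<and> letter p i < letter p (i+1) \<longrightarrow>
        Max (w2_letters p i) < Max (w4_letters p i))"

definition d :: "nat \<Rightarrow> nat \<Rightarrow> nat" where
  "d n i = card {p \<in> perms n. andre p \<and> des p = i}"

definition R :: "nat \<Rightarrow> real \<Rightarrow> real" where
  "R n x = (\<Sum>p\<in>perms n. x ^ run p)"

definition D :: "nat \<Rightarrow> real \<Rightarrow> real" where
  "D n x = (\<Sum>i = 0..(n - 1) div 2. real (d n i) * x ^ (i + 1))"

end

theory Submission
  imports Defs "HOL-Computational_Algebra.Polynomial"
begin

(*
  Both sides are polynomials in x satisfying, for n >= 2, the recurrence
    P (n + 1) = (x - x^3) P' n + (2 x + (n - 1) x^2) P n,   P 2 = 2 x.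
  For R this comes from inserting n + 1 into a permutation of [n] with t interior
  turning points: of the n + 1 results, t + 1 have t turning points, two have t + 1
  and the remaining n - 2 - t have t + 2.
  For the right-hand side, an Andre permutation of a finite set, written u m v with m
  its minimum, is characterised by: v is nonempty, max u < max v, and u and v are Andre
  (or have at most one letter). This gives a binomial convolution for the descent
  polynomials A n = sum_i d n i t^i, equivalent to
    A (n + 1) = (1 + (n - 1) t) A n + (t - 2 t^2) A' n,
  i.e. d (n + 1) (j + 1) = (j + 2) d n (j + 1) + (n - 1 - 2 j) d n j, and substituting
  this into 2 sum_i d n i x^(i+1) (1 + x)^(n-2-i) reproduces the recurrence of R.
*)

definition is_turn :: "'a::linorder \<Rightarrow> 'a \<Rightarrow> 'a \<Rightarrow> bool" where
  "is_turn a b c \<longleftrightarrow> (a < b \<and> b > c) \<or> (a > b \<and> b < c)"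

fun turns :: "'a::linorder list \<Rightarrow> nat" where
  "turns (a # b # c # r) = (if is_turn a b c then 1 else 0) + turns (b # c # r)"
| "turns _ = 0"

fun descents :: "'a::linorder list \<Rightarrow> nat" where
  "descents (a # b # r) = (if a > b then 1 else 0) + descents (b # r)"
| "descents _ = 0"

lemma card_filter_atLeastAtMost_Suc:
  assumes "k \<le> Suc n"
  shows "card {i \<in> {k..Suc n}. P i} = (if P k then 1 else 0) + card {i \<in> {k..n}. P (Suc i)}"
proof -
  have "{i \<in> {k..Suc n}. P i} = (if P k then {k} else {}) \<union> Suc ` {i \<in> {k..n}. P (Suc i)}"
  proof (rule set_eqI)
    fix i show "i \<in> {i \<in> {k..Suc n}. P i} \<longleftrightarrow> i \<in> (if P k then {k} else {}) \<union> Suc ` {i \<in> {k..n}. P (Suc i)}"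
      using assms by (cases i) (auto simp: image_iff le_Suc_eq)
  qed
  moreover have "k \<notin> Suc ` {i \<in> {k..n}. P (Suc i)}" by auto
  ultimately show ?thesis by (simp add: card_image)
qed

lemma letter_Cons: "1 < i \<Longrightarrow> letter (a # p) i = letter p (i - 1)"
  by (cases i) (simp_all add: letter_def)

lemma run_eq_Suc_turns: "run p = Suc (turns p)"
proof (induction p rule: turns.induct)
  case (1 a b c r)
  let ?q = "b # c # r"
  let ?P = "\<lambda>p i. is_turn (letter p (i - 1)) (letter p i) (letter p (i + 1))"
  have run: "run p = Suc (card {i \<in> {2..length p - 1}. ?P p i})" for p :: "nat list"
    by (simp add: run_def is_turn_def)
  have "card {i \<in> {2..Suc (length ?q - 1)}. ?P (a # ?q) i}
      = (if ?P (a # ?q) 2 then 1 else 0) + card {i \<in> {2..length ?q - 1}. ?P (a # ?q) (Suc i)}"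
    by (rule card_filter_atLeastAtMost_Suc) simp
  also have "?P (a # ?q) 2 = is_turn a b c"
    by (simp add: letter_def numeral_2_eq_2)
  also have "{i \<in> {2..length ?q - 1}. ?P (a # ?q) (Suc i)} = {i \<in> {2..length ?q - 1}. ?P ?q i}"
    by (intro Collect_cong conj_cong refl) (auto simp: letter_Cons)
  finally show ?case using 1 by (simp add: run)
qed (auto simp: run_def)

lemma des_eq_descents: "des p = descents p"
proof (induction p rule: descents.induct)
  case (1 a b r)
  let ?q = "b # r"
  let ?P = "\<lambda>p i. letter p i > letter p (i + 1)"
  have des: "des p = card {i \<in> {1..length p - 1}. ?P p i}" for p :: "nat list"
    by (simp add: des_def)
  have "card {i \<in> {1..Suc (length ?q - 1)}. ?P (a # ?q) i}
      = (if ?P (a # ?q) 1 then 1 else 0) + card {i \<in> {1..length ?q - 1}. ?P (a # ?q) (Suc i)}"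
    by (rule card_filter_atLeastAtMost_Suc) simp
  also have "?P (a # ?q) 1 = (a > b)"
    by (simp add: letter_def)
  also have "{i \<in> {1..length ?q - 1}. ?P (a # ?q) (Suc i)} = {i \<in> {1..length ?q - 1}. ?P ?q i}"
    by (intro Collect_cong conj_cong refl) (auto simp: letter_Cons)
  finally show ?case using 1 by (simp add: des)
qed (auto simp: des_def)

section \<open>Inserting the largest letter\<close>

definition insert_at :: "nat \<Rightarrow> 'a \<Rightarrow> 'a list \<Rightarrow> 'a list" where
  "insert_at j y xs = take j xs @ y # drop j xs"

lemma insert_at_0 [simp]: "insert_at 0 y xs = y # xs"
  by (simp add: insert_at_def)

lemma insert_at_Suc_Cons [simp]: "insert_at (Suc j) y (x # xs) = x # insert_at j y xs"
  by (simp add: insert_at_def)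

lemma sum_atLeast0_atMost_Suc_Suc_shift:
  "(\<Sum>j = 0..Suc (Suc n). f j) = f 0 + f 1 + (\<Sum>j = 0..n. f (Suc (Suc j)))"
  by (subst sum.atLeast0_atMost_Suc_shift)+ (simp add: add.assoc)

lemma sum_turns_insert_at_Cons3:
  fixes x :: "'b::comm_ring_1" and M :: "'a::linorder"
  defines "S \<equiv> \<lambda>p. \<Sum>j = 0..length p. x ^ turns (insert_at j M p)"
  shows "S (a # b # c # r) = x ^ turns (M # a # b # c # r) + x ^ turns (a # M # b # c # r)
     + x ^ turns (a # b # M # c # r)
     + x ^ (if is_turn a b c then 1 else 0) * (S (b # c # r) - x ^ turns (M # b # c # r) - x ^ turns (b # M # c # r))"
proof -
  have "S (b # c # r) - x ^ turns (M # b # c # r) - x ^ turns (b # M # c # r)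
      = (\<Sum>j = 0..length r. x ^ turns (b # c # insert_at j M r))"
    unfolding S_def by (simp only: length_Cons sum_atLeast0_atMost_Suc_Suc_shift) simp
  moreover have "S (a # b # c # r) = x ^ turns (M # a # b # c # r) + x ^ turns (a # M # b # c # r)
     + x ^ turns (a # b # M # c # r) + (\<Sum>j = 0..length r. x ^ turns (a # b # c # insert_at j M r))"
    unfolding S_def by (simp only: length_Cons sum.atLeast0_atMost_Suc_shift sum_atLeast0_atMost_Suc_Suc_shift) simp
  moreover have "x ^ turns (a # b # c # insert_at j M r) = x ^ (if is_turn a b c then 1 else 0) * x ^ turns (b # c # insert_at j M r)" for j
    by (cases "insert_at j M r") (simp_all add: power_add)
  ultimately show ?thesis by (simp add: sum_distrib_left)
qed

lemma sum_turns_insert_max: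
  fixes x :: "'b::comm_ring_1" and M :: "'a::linorder"
  assumes "2 \<le> length p" "distinct p" "\<forall>y\<in>set p. y < M"
  shows "(\<Sum>j = 0..length p. x ^ turns (insert_at j M p))
       = x ^ turns p * (of_nat (turns p) + 1 + 2 * x + (of_nat (length p) - 2 - of_nat (turns p)) * x\<^sup>2)"
  using assms
proof (induction p rule: induct_list012)
  case (3 a b r)
  show ?case
  proof (cases r)
    case Nil
    with 3 show ?thesis
      by (auto simp: is_turn_def numeral_2_eq_2 power2_eq_square algebra_simps)
  next
    case (Cons c r')
    have lt: "a < M" "b < M" "c < M" and ne: "a \<noteq> b" "b \<noteq> c"
      using "3.prems" Cons by auto
    have IH: "(\<Sum>j = 0..length (b # c # r'). x ^ turns (insert_at j M (b # c # r'))) =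
        x ^ turns (b # c # r') * (of_nat (turns (b # c # r')) + 1 + 2 * x
          + (of_nat (length (b # c # r')) - 2 - of_nat (turns (b # c # r'))) * x\<^sup>2)"
      using "3.IH"(2) "3.prems" Cons by auto
    show ?thesis
    proof (cases r')
      case Nil
      show ?thesis
        unfolding Cons Nil sum_turns_insert_at_Cons3[of x M a b c "[]"] IH[unfolded Nil]
        using lt ne by (cases "a < b"; cases "b < c") (auto simp: is_turn_def power2_eq_square algebra_simps)
    next
      case (Cons d s)
      have "c < d \<or> c > d" "d < M" using "3.prems" \<open>r = c # r'\<close> Cons by auto
      then show ?thesis
        unfolding \<open>r = c # r'\<close> Cons sum_turns_insert_at_Cons3[of x M a b c "d # s"] IH[unfolded Cons]
        using lt ne by (cases "a < b"; cases "b < c"; cases "c < d")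
          (auto simp: is_turn_def power2_eq_square power_add algebra_simps)
    qed
  qed
qed simp_all

lemma set_insert_at: "set (insert_at j y xs) = insert y (set xs)"
proof -
  have "set (insert_at j y xs) = insert y (set (take j xs @ drop j xs))"
    by (auto simp: insert_at_def simp del: append_take_drop_id)
  then show ?thesis by simp
qed

lemma distinct_insert_at:
  assumes "y \<notin> set xs" "distinct xs"
  shows "distinct (insert_at j y xs)"
proof -
  have "distinct (take j xs @ drop j xs)" "y \<notin> set (take j xs)" "y \<notin> set (drop j xs)"
    using assms by (auto dest: in_set_takeD in_set_dropD)
  then show ?thesis
    by (auto simp: insert_at_def simp del: append_take_drop_id)
qed

lemma insert_at_inj:
  assumes "y \<notin> set xs" "y \<notin> set xs'" "j \<le> length xs" "j' \<le> length xs'"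
    and "insert_at j y xs = insert_at j' y xs'"
  shows "xs = xs' \<and> j = j'"
proof -
  have "y \<notin> set (take j xs)" "y \<notin> set (drop j xs)" "y \<notin> set (take j' xs')" "y \<notin> set (drop j' xs')"
    using assms by (auto dest: in_set_takeD in_set_dropD)
  with assms(5) have "take j xs = take j' xs'" "drop j xs = drop j' xs'"
    unfolding insert_at_def by (metis append_Cons_eq_iff)+
  then show ?thesis
    using assms(3,4) by (metis append_take_drop_id length_take min.absorb2)
qed

lemma perms_iff: "p \<in> perms n \<longleftrightarrow> set p = {1..n} \<and> distinct p"
  by (simp add: perms_def permutations_of_set_def)

lemma length_perms: "p \<in> perms n \<Longrightarrow> length p = n"
  by (metis perms_iff card_atLeastAtMost diff_Suc_1 distinct_card)

lemma finite_perms [simp]: "finite (perms n)"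
  by (simp add: perms_def)

lemma perms_Suc_eq_image:
  "perms (Suc n) = (\<lambda>(p, j). insert_at j (Suc n) p) ` (perms n \<times> {0..n})"
proof (intro set_eqI iffI)
  fix q assume q: "q \<in> perms (Suc n)"
  then have "Suc n \<in> set q" by (simp add: perms_iff)
  then obtain u v where uv: "q = u @ Suc n # v" by (meson split_list)
  have "set (u @ v) = {1..Suc n} - {Suc n}" "distinct (u @ v)"
    using q uv by (auto simp: perms_iff)
  then have p: "u @ v \<in> perms n"
    by (simp add: perms_iff atLeastAtMostSuc_conv)
  moreover have "q = insert_at (length u) (Suc n) (u @ v)"
    by (simp add: insert_at_def uv)
  ultimately show "q \<in> (\<lambda>(p, j). insert_at j (Suc n) p) ` (perms n \<times> {0..n})"
    using length_perms[OF p] by (intro image_eqI[where x="(u @ v, length u)"]) auto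
next
  fix q assume "q \<in> (\<lambda>(p, j). insert_at j (Suc n) p) ` (perms n \<times> {0..n})"
  then obtain p j where "p \<in> perms n" "q = insert_at j (Suc n) p" by auto
  then show "q \<in> perms (Suc n)"
    by (auto simp: perms_iff set_insert_at distinct_insert_at atLeastAtMostSuc_conv)
qed

lemma sum_perms_Suc:
  "(\<Sum>q\<in>perms (Suc n). g q) = (\<Sum>p\<in>perms n. \<Sum>j = 0..n. g (insert_at j (Suc n) p))"
proof -
  have "inj_on (\<lambda>(p, j). insert_at j (Suc n) p) (perms n \<times> {0..n})"
  proof (rule inj_onI, clarsimp)
    fix p j p' j' assume "p \<in> perms n" "p' \<in> perms n" "j \<le> n" "j' \<le> n"
      "insert_at j (Suc n) p = insert_at j' (Suc n) p'"
    then show "p = p' \<and> j = j'"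
      using length_perms[of p n] length_perms[of p' n] by (intro insert_at_inj) (auto simp: perms_iff)
  qed
  then show ?thesis
    by (simp add: perms_Suc_eq_image sum.reindex sum.cartesian_product case_prod_unfold)
qed

section \<open>The run polynomial\<close>

definition diff_op :: "'a::idom poly \<Rightarrow> 'a poly \<Rightarrow> 'a poly \<Rightarrow> 'a poly" where
  "diff_op a b f = a * pderiv f + b * f"

lemma diff_op_sum: "diff_op a b (\<Sum>i\<in>I. f i) = (\<Sum>i\<in>I. diff_op a b (f i))"
  by (induction I rule: infinite_finite_induct) (simp_all add: diff_op_def pderiv_add algebra_simps)

lemma diff_op_of_nat_mult: "diff_op a b (of_nat c * f) = of_nat c * diff_op a b f"
  by (simp add: diff_op_def pderiv_mult algebra_simps)

lemma pderiv_X: "pderiv [:0, 1:] = 1"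
  by (simp add: pderiv_pCons)

definition run_poly :: "nat \<Rightarrow> real poly" where
  "run_poly n = (\<Sum>p\<in>perms n. [:0, 1:] ^ run p)"

lemma poly_run_poly: "poly (run_poly n) x = R n x"
  by (simp add: run_poly_def R_def poly_sum)

definition run_op :: "nat \<Rightarrow> real poly \<Rightarrow> real poly" where
  "run_op n = diff_op ([:0, 1:] - [:0, 1:] ^ 3) (2 * [:0, 1:] + (of_nat n - 1) * [:0, 1:]\<^sup>2)"

lemma run_op_sum: "run_op n (\<Sum>i\<in>I. f i) = (\<Sum>i\<in>I. run_op n (f i))"
  by (simp add: run_op_def diff_op_sum)

lemma run_op_of_nat_mult: "run_op n (of_nat c * f) = of_nat c * run_op n f"
  by (simp add: run_op_def diff_op_of_nat_mult)

lemma pderiv_X_power: "pderiv ([:0, 1:] ^ Suc t) = of_nat (Suc t) * ([:0, 1:] ^ t :: 'a::idom poly)"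
  by (simp only: pderiv_power_Suc) (simp add: pderiv_pCons of_nat_poly)

lemma run_op_X_power:
  "run_op n ([:0, 1:] ^ Suc t) = [:0, 1:] * ([:0, 1:] ^ t
     * (of_nat t + 1 + 2 * [:0, 1:] + (of_nat n - 2 - of_nat t) * [:0, 1:]\<^sup>2))"
proof -
  have "(X - X ^ 3) * (of_nat (Suc t) * X ^ t) + (2 * X + (of_nat n - 1) * X\<^sup>2) * X ^ Suc t
      = X * (X ^ t * (of_nat t + 1 + 2 * X + (of_nat n - 2 - of_nat t) * X\<^sup>2))" for X :: "real poly"
    by (simp add: power2_eq_square power3_eq_cube algebra_simps)
  then show ?thesis
    by (simp only: run_op_def diff_op_def pderiv_X_power)
qed

lemma run_poly_Suc:
  assumes "2 \<le> n"
  shows "run_poly (Suc n) = run_op n (run_poly n)"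
proof -
  have "(\<Sum>j = 0..n. [:0, 1:] ^ run (insert_at j (Suc n) p)) = run_op n ([:0, 1:] ^ run p)"
    if p: "p \<in> perms n" for p
  proof -
    have p': "length p = n" "distinct p" "\<forall>y\<in>set p. y < Suc n"
      using p by (auto simp: length_perms perms_iff)
    have "(\<Sum>j = 0..n. [:0, 1:] ^ run (insert_at j (Suc n) p))
        = [:0, 1:] * (\<Sum>j = 0..n. [:0, 1:] ^ turns (insert_at j (Suc n) p))"
      by (simp only: run_eq_Suc_turns power_Suc sum_distrib_left)
    also have "\<dots> = run_op n ([:0, 1:] ^ run p)"
      using sum_turns_insert_max[of p "Suc n" "[:0, 1:] :: real poly"] p' assms
      by (simp only: run_eq_Suc_turns run_op_X_power)
    finally show ?thesis .
  qed
  then show ?thesis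
    by (simp add: run_poly_def sum_perms_Suc run_op_sum)
qed

lemma less_length_takeWhile_iff:
  "k < length (takeWhile P xs) \<longleftrightarrow> k < length xs \<and> (\<forall>j\<le>k. P (xs ! j))"
proof
  assume k: "k < length (takeWhile P xs)"
  then have "P (xs ! j)" if "j \<le> k" for j
    using that set_takeWhileD[OF nth_mem, of j P xs] takeWhile_nth[of j P xs] by simp
  with k show "k < length xs \<and> (\<forall>j\<le>k. P (xs ! j))"
    using length_takeWhile_le[of P xs] by simp
next
  assume "k < length xs \<and> (\<forall>j\<le>k. P (xs ! j))"
  then show "k < length (takeWhile P xs)"
    using length_takeWhile_less_P_nth[of "Suc k" P xs] by (simp add: less_Suc_eq_le)
qed

lemma set_takeWhile_conv_nth:
  "set (takeWhile P xs) = {xs ! k | k. k < length xs \<and> (\<forall>j\<le>k. P (xs ! j))}"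
proof -
  have "set (takeWhile P xs) = {takeWhile P xs ! k | k. k < length (takeWhile P xs)}"
    by (rule set_conv_nth)
  also have "\<dots> = {xs ! k | k. k < length (takeWhile P xs)}"
    by (simp only: setcompr_eq_image) (rule image_cong; simp add: takeWhile_nth)
  finally show ?thesis
    by (simp only: less_length_takeWhile_iff)
qed

lemma setcompr_cong:
  assumes "\<And>k. P k \<longleftrightarrow> Q k" "\<And>k. P k \<Longrightarrow> f k = g k"
  shows "{f k | k. P k} = {g k | k. Q k}"
  using assms by (metis (mono_tags, lifting))

lemma w4_letters_conv_takeWhile:
  "w4_letters p i = set (takeWhile (\<lambda>y. letter p i < y) (drop i p))"
proof -
  let ?c = "letter p i"
  have "w4_letters p i = {letter p (i + 1 + k) | k. k < length p - i \<and> (\<forall>j\<le>k. ?c < letter p (i + 1 + j))}"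
  proof (intro set_eqI iffI)
    fix y assume "y \<in> w4_letters p i"
    then obtain j where j: "y = letter p j" "i < j" "j \<le> length p"
      and above: "\<And>k. i < k \<Longrightarrow> k \<le> j \<Longrightarrow> ?c < letter p k"
      unfolding w4_letters_def by blast
    have "?c < letter p (i + 1 + l)" if "l \<le> j - i - 1" for l
      using above[of "i + 1 + l"] that j by simp
    with j show "y \<in> {letter p (i + 1 + k) | k. k < length p - i \<and> (\<forall>j\<le>k. ?c < letter p (i + 1 + j))}"
      by (intro CollectI exI[of _ "j - i - 1"]) simp
  next
    fix y assume "y \<in> {letter p (i + 1 + k) | k. k < length p - i \<and> (\<forall>j\<le>k. ?c < letter p (i + 1 + j))}"
    then obtain k where k: "y = letter p (i + 1 + k)" "k < length p - i"
      and above: "\<And>j. j \<le> k \<Longrightarrow> ?c < letter p (i + 1 + j)"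
      by blast
    have "?c < letter p l" if "i < l" "l \<le> i + 1 + k" for l
      using above[of "l - i - 1"] that by simp
    with k show "y \<in> w4_letters p i"
      unfolding w4_letters_def by (intro CollectI exI[of _ "i + 1 + k"]) simp
  qed
  then show ?thesis
    by (auto simp: set_takeWhile_conv_nth letter_def)
qed

lemma w2_letters_conv_takeWhile:
  assumes "i \<le> length p"
  shows "w2_letters p i = set (takeWhile (\<lambda>y. letter p i < y) (rev (take (i - 1) p)))"
proof -
  let ?c = "letter p i"
  have "w2_letters p i = {letter p (i - 1 - k) | k. k < i - 1 \<and> (\<forall>j\<le>k. ?c < letter p (i - 1 - j))}"
  proof (intro set_eqI iffI)
    fix y assume "y \<in> w2_letters p i"
    then obtain j where j: "y = letter p j" "1 \<le> j" "j < i"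
      and above: "\<And>k. j \<le> k \<Longrightarrow> k < i \<Longrightarrow> ?c < letter p k"
      unfolding w2_letters_def by blast
    have "?c < letter p (i - 1 - l)" if "l \<le> i - 1 - j" for l
      using above[of "i - 1 - l"] that j by simp
    with j show "y \<in> {letter p (i - 1 - k) | k. k < i - 1 \<and> (\<forall>j\<le>k. ?c < letter p (i - 1 - j))}"
      by (intro CollectI exI[of _ "i - 1 - j"]) simp
  next
    fix y assume "y \<in> {letter p (i - 1 - k) | k. k < i - 1 \<and> (\<forall>j\<le>k. ?c < letter p (i - 1 - j))}"
    then obtain k where k: "y = letter p (i - 1 - k)" "k < i - 1"
      and above: "\<And>j. j \<le> k \<Longrightarrow> ?c < letter p (i - 1 - j)"
      by blast
    have "?c < letter p l" if "i - 1 - k \<le> l" "l < i" for l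
      using above[of "i - 1 - l"] that by simp
    with k show "y \<in> w2_letters p i"
      unfolding w2_letters_def by (intro CollectI exI[of _ "i - 1 - k"]) simp
  qed
  also have "\<dots> = set (takeWhile (\<lambda>y. ?c < y) (rev (take (i - 1) p)))"
    unfolding set_takeWhile_conv_nth
  proof (rule setcompr_cong)
    have rev_nth_take: "rev (take (i - 1) p) ! k = letter p (i - 1 - k)" if "k < i - 1" for k
      using assms that by (simp add: rev_nth letter_def)
    then show "(k < i - 1 \<and> (\<forall>j\<le>k. ?c < letter p (i - 1 - j)))
        \<longleftrightarrow> (k < length (rev (take (i - 1) p)) \<and> (\<forall>j\<le>k. ?c < rev (take (i - 1) p) ! j))" for k
      using assms by auto
    show "letter p (i - 1 - k) = rev (take (i - 1) p) ! k" if "k < i - 1 \<and> (\<forall>j\<le>k. ?c < letter p (i - 1 - j))" for k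
      using that rev_nth_take by simp
  qed
  finally show ?thesis .
qed

lemma letter_append_left: "1 \<le> k \<Longrightarrow> k \<le> length u \<Longrightarrow> letter (u @ v) k = letter u k"
  by (cases k) (simp_all add: letter_def nth_append)

lemma letter_append_right: "1 \<le> k \<Longrightarrow> letter (u @ v) (length u + k) = letter v k"
  by (cases k) (simp_all add: letter_def nth_append)

lemma w2_letters_append_left:
  "1 \<le> i \<Longrightarrow> i \<le> length u \<Longrightarrow> w2_letters (u @ v) i = w2_letters u i"
  by (simp add: w2_letters_conv_takeWhile letter_append_left)

lemma w4_letters_append_left:
  assumes "1 \<le> i" "i \<le> length u" "v \<noteq> []" "hd v < letter u i"
  shows "w4_letters (u @ v) i = w4_letters u i"
proof -
  obtain x v' where "v = x # v'" "x < letter u i"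
    using assms by (cases v) auto
  then show ?thesis
    using assms by (simp add: w4_letters_conv_takeWhile letter_append_left takeWhile_tail)
qed

lemma w4_letters_append_right:
  "1 \<le> i \<Longrightarrow> w4_letters (u @ v) (length u + i) = w4_letters v i"
  by (simp add: w4_letters_conv_takeWhile letter_append_right)

lemma w2_letters_append_right:
  assumes "1 \<le> i" "i \<le> length v" "u \<noteq> []" "last u < letter v i"
  shows "w2_letters (u @ v) (length u + i) = w2_letters v i"
proof -
  obtain u' x where "rev u = x # u'" "x < letter v i"
    using assms by (cases u rule: rev_cases) auto
  have "w2_letters (u @ v) (length u + i) = set (takeWhile ((<) (letter v i)) (rev (take (i - 1) v) @ rev u))"
    using w2_letters_conv_takeWhile[of "length u + i" "u @ v"] assms by (simp add: letter_append_right)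
  also have "\<dots> = w2_letters v i"
    using \<open>rev u = x # u'\<close> \<open>x < letter v i\<close> assms by (simp add: takeWhile_tail w2_letters_conv_takeWhile)
  finally show ?thesis .
qed

lemma w2_letters_at_min:
  assumes "\<forall>y\<in>set u. m < y"
  shows "w2_letters (u @ m # v) (Suc (length u)) = set u"
proof -
  have "w2_letters (u @ m # v) (Suc (length u)) = set (takeWhile ((<) m) (rev u))"
    by (simp add: w2_letters_conv_takeWhile letter_def nth_append)
  also have "takeWhile ((<) m) (rev u) = rev u"
    using assms by simp
  finally show ?thesis by simp
qed

lemma w4_letters_at_min:
  assumes "\<forall>y\<in>set v. m < y"
  shows "w4_letters (u @ m # v) (Suc (length u)) = set v"
proof -
  have "w4_letters (u @ m # v) (Suc (length u)) = set (takeWhile ((<) m) v)"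
    by (simp add: w4_letters_conv_takeWhile letter_def nth_append)
  also have "takeWhile ((<) m) v = v"
    using assms by simp
  finally show ?thesis by simp
qed

section \<open>Splitting Andre permutations at their minimum\<close>

definition andre_at :: "nat list \<Rightarrow> nat \<Rightarrow> bool" where
  "andre_at p i \<longleftrightarrow>
     \<not> (letter p (i - 1) > letter p i \<and> letter p i > letter p (i + 1)) \<and>
     (letter p (i - 1) > letter p i \<and> letter p i < letter p (i + 1) \<longrightarrow>
        Max (w2_letters p i) < Max (w4_letters p i))"

definition ends_with_ascent :: "nat list \<Rightarrow> bool" where
  "ends_with_ascent p \<longleftrightarrow> letter p (length p - 1) < letter p (length p)"

lemma andre_iff_andre_at:
  "andre p \<longleftrightarrow> (\<forall>i\<in>{2..length p - 1}. andre_at p i) \<and> ends_with_ascent p"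
  unfolding andre_def andre_at_def ends_with_ascent_def by blast

lemma andre_at_append_left:
  assumes "2 \<le> i" "i < length u" "v \<noteq> []" "hd v < letter u i"
  shows "andre_at (u @ v) i \<longleftrightarrow> andre_at u i"
  using assms by (simp add: andre_at_def letter_append_left w2_letters_append_left w4_letters_append_left)

lemma andre_at_append_right:
  assumes "2 \<le> i" "i < length v" "u \<noteq> []" "last u < letter v i"
  shows "andre_at (u @ v) (length u + i) \<longleftrightarrow> andre_at v i"
proof -
  have "letter (u @ v) (length u + i - 1) = letter v (i - 1)"
    using letter_append_right[of "i - 1" u v] assms by simp
  moreover have "letter (u @ v) (length u + i + 1) = letter v (i + 1)"
    using letter_append_right[of "i + 1" u v] by simp
  ultimately show ?thesis
    using assms by (simp add: andre_at_def letter_append_right w2_letters_append_right w4_letters_append_right)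
qed

lemma ends_with_ascent_append_right:
  "2 \<le> length v \<Longrightarrow> ends_with_ascent (u @ v) \<longleftrightarrow> ends_with_ascent v"
  using letter_append_right[of "length v - 1" u v] letter_append_right[of "length v" u v]
  by (simp add: ends_with_ascent_def)

lemma letter_at_min: "letter (u @ m # v) (Suc (length u)) = m"
  by (simp add: letter_def nth_append)

lemma letter_in_set: "1 \<le> k \<Longrightarrow> k \<le> length u \<Longrightarrow> letter u k \<in> set u"
  by (simp add: letter_def)

lemma letter_last_gt_min: "u \<noteq> [] \<Longrightarrow> \<forall>y\<in>set u. m < y \<Longrightarrow> m < letter u (length u)"
  by (simp add: letter_def last_conv_nth[symmetric])

lemma letter_first_gt_min: "v \<noteq> [] \<Longrightarrow> \<forall>y\<in>set v. m < y \<Longrightarrow> m < letter v 1"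
  by (simp add: letter_def hd_conv_nth[symmetric])

lemma letter_after_min: "1 \<le> k \<Longrightarrow> letter (u @ m # v) (Suc (length u) + k) = letter v k"
  using letter_append_right[of k "u @ [m]" v] by simp

lemma andre_at_before_min:
  assumes "2 \<le> length u" "distinct u" "\<forall>y\<in>set u. m < y"
  shows "andre_at (u @ m # v) (length u) \<longleftrightarrow> ends_with_ascent u"
proof -
  have "letter u (length u - 1) \<noteq> letter u (length u)"
    using assms(1,2) by (simp add: letter_def nth_eq_iff_index_eq)
  moreover have "m < letter u (length u)"
    using assms(1,3) by (simp add: letter_def)
  ultimately show ?thesis
    using assms letter_at_min[of u m v] letter_append_left[of "length u - 1" u "m # v"]
      letter_append_left[of "length u" u "m # v"]
    by (auto simp: andre_at_def ends_with_ascent_def)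
qed

lemma andre_at_min:
  assumes "u \<noteq> []" "v \<noteq> []" "\<forall>y\<in>set u. m < y" "\<forall>y\<in>set v. m < y"
  shows "andre_at (u @ m # v) (Suc (length u)) \<longleftrightarrow> Max (set u) < Max (set v)"
proof -
  have "letter (u @ m # v) (length u) > m" "letter (u @ m # v) (Suc (Suc (length u))) > m"
    using assms letter_append_left[of "length u" u "m # v"] letter_after_min[of 1 u m v]
      letter_last_gt_min[of u m] letter_first_gt_min[of v m]
    by (simp_all add: Suc_leI)
  then show ?thesis
    using assms by (simp add: andre_at_def letter_at_min w2_letters_at_min w4_letters_at_min)
qed

lemma andre_at_after_min:
  assumes "v \<noteq> []" "\<forall>y\<in>set v. m < y"
  shows "andre_at (u @ m # v) (Suc (Suc (length u)))"
  using letter_at_min[of u m v] letter_after_min[of 1 u m v] letter_first_gt_min[OF assms]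
  by (simp add: andre_at_def)

lemma ends_with_ascent_append_min:
  assumes "\<forall>y\<in>set u. m < y" "\<forall>y\<in>set v. m < y"
  shows "ends_with_ascent (u @ m # v) \<longleftrightarrow> v \<noteq> [] \<and> (2 \<le> length v \<longrightarrow> ends_with_ascent v)"
proof (cases "2 \<le> length v")
  case True
  then show ?thesis
    using ends_with_ascent_append_right[of v "u @ [m]"] by auto
next
  case False
  then consider "v = []" | x where "v = [x]"
    by (cases v; cases "tl v") auto
  then show ?thesis
  proof cases
    case 1
    show ?thesis
    proof (cases "u = []")
      case True
      with 1 show ?thesis by (simp add: ends_with_ascent_def letter_def)
    next
      case False
      then have "m < letter (u @ [m]) (length u)"
        using letter_append_left[of "length u" u "[m]"] letter_last_gt_min[of u m] assms
        by (simp add: Suc_leI)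
      with 1 show ?thesis
        using letter_at_min[of u m "[]"] by (simp add: ends_with_ascent_def)
    qed
  next
    case 2
    then show ?thesis
      using assms by (simp add: ends_with_ascent_def letter_def nth_append)
  qed
qed

text \<open>For \<open>u @ m # v\<close> with \<open>a = length u\<close> and \<open>b = length v\<close>: interior positions of \<open>u\<close>,
  the last letter of \<open>u\<close>, the letter \<open>m\<close>, the first letter of \<open>v\<close>, interior positions of \<open>v\<close>.\<close>

lemma ball_atLeastAtMost_split_around:
  "(\<forall>i\<in>{2..a + b}. P i) \<longleftrightarrow>
     (\<forall>i\<in>{2..a - 1}. P i) \<and> (2 \<le> a \<longrightarrow> P a) \<and> (1 \<le> a \<longrightarrow> 1 \<le> b \<longrightarrow> P (Suc a)) \<and>
     (2 \<le> b \<longrightarrow> P (Suc (Suc a))) \<and> (\<forall>i\<in>{2..b - 1}. P (Suc a + i))"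
    (is "?all \<longleftrightarrow> ?parts")
proof
  assume ?all
  then show ?parts
    by (intro conjI impI ballI) auto
next
  assume parts: ?parts
  show ?all
  proof
    fix i assume i: "i \<in> {2..a + b}"
    consider "i < a" | "i = a" | "i = Suc a" | "i = Suc (Suc a)" | "Suc (Suc a) < i"
      by linarith
    then show "P i"
    proof cases
      case 5
      then have "i = Suc a + (i - Suc a)" "i - Suc a \<in> {2..b - 1}"
        using i by auto
      then show ?thesis
        using parts by metis
    qed (use parts i in auto)
  qed
qed

lemma andre_append_min:
  assumes "distinct (u @ m # v)" "\<forall>y\<in>set u. m < y" "\<forall>y\<in>set v. m < y"
  shows "andre (u @ m # v) \<longleftrightarrow> v \<noteq> [] \<and> (u \<noteq> [] \<longrightarrow> Max (set u) < Max (set v)) \<and>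
     (2 \<le> length u \<longrightarrow> andre u) \<and> (2 \<le> length v \<longrightarrow> andre v)"
proof -
  let ?p = "u @ m # v"
  have left: "andre_at ?p i \<longleftrightarrow> andre_at u i" if "i \<in> {2..length u - 1}" for i
    using that assms(2) letter_in_set[of i u] by (intro andre_at_append_left) auto
  have right: "andre_at ?p (Suc (length u) + i) \<longleftrightarrow> andre_at v i" if "i \<in> {2..length v - 1}" for i
    using that assms(3) letter_in_set[of i v] andre_at_append_right[of i v "u @ [m]"] by auto
  have "(\<forall>i\<in>{2..length ?p - 1}. andre_at ?p i) \<longleftrightarrow>
      (\<forall>i\<in>{2..length u - 1}. andre_at u i) \<and> (2 \<le> length u \<longrightarrow> ends_with_ascent u) \<and>
      (u \<noteq> [] \<and> v \<noteq> [] \<longrightarrow> Max (set u) < Max (set v)) \<and> (\<forall>i\<in>{2..length v - 1}. andre_at v i)"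
  proof -
    have before: "2 \<le> length u \<Longrightarrow> andre_at ?p (length u) \<longleftrightarrow> ends_with_ascent u"
      using assms andre_at_before_min[of u m v] by simp
    have at_min: "1 \<le> length u \<Longrightarrow> 1 \<le> length v \<Longrightarrow>
        andre_at ?p (Suc (length u)) \<longleftrightarrow> Max (set u) < Max (set v)"
      by (intro andre_at_min) (use assms in \<open>auto simp: Suc_le_eq\<close>)
    have after: "2 \<le> length v \<Longrightarrow> andre_at ?p (Suc (Suc (length u)))"
      by (intro andre_at_after_min) (use assms in auto)
    show ?thesis
      unfolding length_append length_Cons add_Suc_right diff_Suc_1 ball_atLeastAtMost_split_around
      using left right before at_min after by (auto simp: Suc_le_eq)
  qed
  then show ?thesis
    using andre_iff_andre_at[of ?p] andre_iff_andre_at[of u] andre_iff_andre_at[of v]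
      ends_with_ascent_append_min[OF assms(2,3)]
    by (auto simp: not_le)
qed

section \<open>The descent polynomial of Andre permutations\<close>

lemma descents_append_min:
  assumes "\<forall>y\<in>set u. m < y" "\<forall>y\<in>set v. m < y"
  shows "descents (u @ m # v) = descents u + descents v + (if u = [] then 0 else 1)"
  using assms
proof (induction u rule: induct_list012)
  case 1
  then show ?case by (cases v) auto
next
  case (2 x)
  then show ?case by (cases v) auto
qed simp

text \<open>\<open>andre\<close> fails on lists of length at most 1 (its last condition then compares a letter with
  itself), but they are the base cases of the decomposition, so they are admitted explicitly.\<close>

definition andre_perms :: "nat set \<Rightarrow> nat list set" where
  "andre_perms S = {p \<in> permutations_of_set S. length p \<le> 1 \<or> andre p}"

lemma andre_perms_iff: "p \<in> andre_perms S \<longleftrightarrow> set p = S \<and> distinct p \<and> (length p \<le> 1 \<or> andre p)"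
  by (simp add: andre_perms_def permutations_of_set_def)

lemma finite_andre_perms [simp]: "finite (andre_perms S)"
  by (cases "finite S") (simp_all add: andre_perms_def permutations_of_set_infinite)

lemma Min_less_Max:
  fixes S :: "'a::linorder set"
  assumes "finite S" "2 \<le> card S"
  shows "Min S < Max S"
proof -
  obtain x y where "x \<in> S" "y \<in> S" "x < y"
    using assms by (metis card_le_Suc0_iff_eq linorder_neqE not_less_eq_eq numeral_2_eq_2)
  then show ?thesis
    using assms(1) by (meson Max_ge Min_le le_less_trans less_le_trans)
qed

definition andre_splits :: "nat set \<Rightarrow> (nat set \<times> nat list \<times> nat list) set" where
  "andre_splits S = (SIGMA U:Pow (S - {Min S, Max S}). andre_perms U \<times> andre_perms (S - {Min S} - U))"

lemma andre_splits_iff: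
  "(U, u, v) \<in> andre_splits S \<longleftrightarrow> U \<subseteq> S - {Min S, Max S} \<and> set u = U \<and> set v = S - {Min S} - U \<and>
     distinct u \<and> distinct v \<and> (length u \<le> 1 \<or> andre u) \<and> (length v \<le> 1 \<or> andre v)"
  by (auto simp: andre_splits_def andre_perms_iff)

lemma Min_less_of_mem:
  fixes S :: "'a::linorder set"
  shows "finite S \<Longrightarrow> y \<in> S \<Longrightarrow> y \<noteq> Min S \<Longrightarrow> Min S < y"
  using Min_le[of S y] by (simp add: order.not_eq_order_implies_strict)

lemma andre_perms_split_at_Min:
  assumes "finite S" "2 \<le> card S" "p \<in> andre_perms S"
  obtains u v where "p = u @ Min S # v" "(set u, u, v) \<in> andre_splits S"
proof -
  have set_p: "set p = S" and dist: "distinct p" and "andre p"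
    using assms distinct_card[of p] by (auto simp: andre_perms_iff)
  have "S \<noteq> {}"
    using assms(2) by auto
  then have "Min S \<in> set p"
    using assms(1) set_p by simp
  then obtain u v where uv: "p = u @ Min S # v"
    by (meson split_list)
  have above: "\<forall>y\<in>set u. Min S < y" "\<forall>y\<in>set v. Min S < y"
    using Min_less_of_mem[OF assms(1)] dist set_p uv by auto
  have split: "v \<noteq> [] \<and> (u \<noteq> [] \<longrightarrow> Max (set u) < Max (set v)) \<and>
      (2 \<le> length u \<longrightarrow> andre u) \<and> (2 \<le> length v \<longrightarrow> andre v)"
    using \<open>andre p\<close> unfolding uv andre_append_min[OF dist[unfolded uv] above] .
  have "Max S \<notin> set u"
  proof
    assume "Max S \<in> set u"
    then have "Max S \<le> Max (set u)" "Max (set u) < Max (set v)"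
      using split by (auto simp del: Max_less_iff)
    moreover have "Max (set v) \<in> set v"
      using split by (intro Max_in) auto
    then have "Max (set v) \<in> S"
      using set_p uv by auto
    then have "Max (set v) \<le> Max S"
      using assms(1) by simp
    ultimately show False
      by linarith
  qed
  then have "(set u, u, v) \<in> andre_splits S"
    using split set_p dist uv by (auto simp: andre_splits_iff)
  with uv show thesis ..
qed

lemma append_Min_mem_andre_perms:
  assumes "finite S" "2 \<le> card S" "(U, u, v) \<in> andre_splits S"
  shows "u @ Min S # v \<in> andre_perms S"
proof -
  have splits: "U \<subseteq> S - {Min S, Max S}" "set u = U" "set v = S - {Min S} - U" "distinct u" "distinct v"
      "length u \<le> 1 \<or> andre u" "length v \<le> 1 \<or> andre v"
    using assms(3) by (simp_all add: andre_splits_iff)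
  have "S \<noteq> {}"
    using assms(2) by auto
  then have "Min S \<in> S" "Max S \<in> S"
    using assms(1) by simp_all
  have dist: "distinct (u @ Min S # v)" and above: "\<forall>y\<in>set u. Min S < y" "\<forall>y\<in>set v. Min S < y"
    using splits Min_less_of_mem[OF assms(1)] by auto
  have "Max S \<in> set v"
    using splits \<open>Max S \<in> S\<close> Min_less_Max[OF assms(1,2)] by auto
  moreover have "\<forall>y\<in>set v. y \<le> Max S"
    using splits assms(1) by auto
  ultimately have "Max (set v) = Max S"
    by (intro Max_eqI) auto
  moreover have "Max (set u) < Max S" if "u \<noteq> []"
  proof -
    have "Max (set u) \<in> set u"
      using that by (intro Max_in) auto
    then have "Max (set u) \<in> S - {Min S, Max S}"
      using splits(1,2) by auto
    then show ?thesis
      using assms(1) by (simp add: order.not_eq_order_implies_strict)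
  qed
  ultimately have "andre (u @ Min S # v)"
    unfolding andre_append_min[OF dist above] using splits(6,7) \<open>Max S \<in> set v\<close>
    by (auto simp del: Max_less_iff)
  moreover have "set (u @ Min S # v) = S"
    using splits \<open>Min S \<in> S\<close> by auto
  ultimately show ?thesis
    using dist by (simp add: andre_perms_iff)
qed

lemma andre_perms_eq_image_splits:
  assumes "finite S" "2 \<le> card S"
  shows "andre_perms S = (\<lambda>(U, u, v). u @ Min S # v) ` andre_splits S"
proof (intro set_eqI iffI)
  fix p assume "p \<in> andre_perms S"
  then obtain u v where "p = u @ Min S # v" "(set u, u, v) \<in> andre_splits S"
    using andre_perms_split_at_Min[OF assms] by blast
  then show "p \<in> (\<lambda>(U, u, v). u @ Min S # v) ` andre_splits S"
    by (intro image_eqI[where x = "(set u, u, v)"]) simp_all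
qed (use append_Min_mem_andre_perms[OF assms] in auto)

lemma inj_on_andre_splits: "inj_on (\<lambda>(U, u, v). u @ Min S # v) (andre_splits S)"
proof (rule inj_onI)
  fix x y assume "x \<in> andre_splits S" "y \<in> andre_splits S"
    and eq: "(\<lambda>(U, u, v). u @ Min S # v) x = (\<lambda>(U, u, v). u @ Min S # v) y"
  moreover obtain U u v U' u' v' where "x = (U, u, v)" "y = (U', u', v')"
    by (cases x, cases y) auto
  ultimately show "x = y"
    using append_Cons_eq_iff[of "Min S" u v u' v'] by (auto simp: andre_splits_iff)
qed

definition andre_des_poly :: "nat set \<Rightarrow> real poly" where
  "andre_des_poly S = (\<Sum>p\<in>andre_perms S. [:0, 1:] ^ des p)"

lemma andre_des_poly_decomp:
  assumes "finite S" "2 \<le> card S"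
  shows "andre_des_poly S = (\<Sum>U\<in>Pow (S - {Min S, Max S}).
           (if U = {} then 1 else [:0, 1:]) * andre_des_poly U * andre_des_poly (S - {Min S} - U))"
proof -
  let ?m = "Min S" and ?M = "Max S"
  have "andre_des_poly S = (\<Sum>(U, u, v)\<in>andre_splits S. [:0, 1:] ^ des (u @ ?m # v))"
    unfolding andre_des_poly_def andre_perms_eq_image_splits[OF assms]
    using inj_on_andre_splits[of S] by (simp add: sum.reindex case_prod_unfold)
  also have "\<dots> = (\<Sum>(U, u, v)\<in>andre_splits S. (if U = {} then 1 else [:0, 1:]) * ([:0, 1:] ^ des u * [:0, 1:] ^ des v))"
  proof (rule sum.cong[OF refl], clarify)
    fix U u v assume "(U, u, v) \<in> andre_splits S"
    then have "\<forall>y\<in>set u. ?m < y" "\<forall>y\<in>set v. ?m < y" "u = [] \<longleftrightarrow> U = {}"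
      using Min_less_of_mem[OF assms(1)] by (auto simp: andre_splits_iff)
    then show "[:0, 1:] ^ des (u @ ?m # v) = (if U = {} then 1 else [:0, 1:]) * ([:0, 1:] ^ des u * [:0, 1:] ^ des v)"
      by (simp add: des_eq_descents descents_append_min power_add)
  qed
  also have "\<dots> = (\<Sum>U\<in>Pow (S - {?m, ?M}). (if U = {} then 1 else [:0, 1:]) *
      (\<Sum>(u, v)\<in>andre_perms U \<times> andre_perms (S - {?m} - U). [:0, 1:] ^ des u * [:0, 1:] ^ des v))"
    unfolding andre_splits_def using assms(1) by (subst sum.Sigma[symmetric]) (auto simp: sum_distrib_left case_prod_unfold)
  also have "\<dots> = (\<Sum>U\<in>Pow (S - {?m, ?M}).
      (if U = {} then 1 else [:0, 1:]) * andre_des_poly U * andre_des_poly (S - {?m} - U))"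
    by (simp add: andre_des_poly_def sum_product sum.cartesian_product mult.assoc)
  finally show ?thesis .
qed

lemma sum_Pow_card:
  assumes "finite T"
  shows "(\<Sum>U\<in>Pow T. h (card U)) = (\<Sum>a = 0..card T. of_nat (card T choose a) * (h a :: 'a::comm_semiring_1))"
proof -
  have "Pow T = (\<Union>a\<in>{0..card T}. {U. U \<subseteq> T \<and> card U = a})"
    using assms by (auto intro: card_mono)
  then have "(\<Sum>U\<in>Pow T. h (card U)) = (\<Sum>a = 0..card T. \<Sum>U | U \<subseteq> T \<and> card U = a. h (card U))"
    by (simp only:) (rule sum.UNION_disjoint, use assms in auto)
  also have "\<dots> = (\<Sum>a = 0..card T. \<Sum>U | U \<subseteq> T \<and> card U = a. h a)"
    by (intro sum.cong) auto
  also have "\<dots> = (\<Sum>a = 0..card T. of_nat (card T choose a) * h a)"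
    using assms by (simp add: n_subsets)
  finally show ?thesis .
qed

lemma andre_perms_empty: "andre_perms {} = {[]}"
  unfolding andre_perms_def by (rule set_eqI) auto

lemma andre_perms_singleton: "andre_perms {x} = {[x]}"
  unfolding andre_perms_def by (rule set_eqI) auto

lemma andre_des_poly_card_le_1:
  fixes S :: "nat set"
  assumes "finite S" "card S \<le> 1"
  shows "andre_des_poly S = 1"
proof (cases "card S")
  case 0
  with assms(1) show ?thesis
    by (simp add: andre_des_poly_def andre_perms_empty des_def)
next
  case (Suc k)
  with assms(2) have "card S = 1"
    by simp
  then obtain x where "S = {x}"
    by (rule card_1_singletonE)
  then show ?thesis
    by (simp add: andre_des_poly_def andre_perms_singleton des_def)
qed

definition andre_poly :: "nat \<Rightarrow> real poly" where
  "andre_poly n = andre_des_poly {1..n}"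

text \<open>The induction hypothesis is an assumption so that the lemma serves both for \<open>S\<close> and for
  \<open>{1..card S}\<close> in the proof that \<open>andre_des_poly S\<close> only depends on \<open>card S\<close>.\<close>

lemma andre_des_poly_eq_convolution:
  assumes "finite S" "2 \<le> card S"
    and smaller: "\<And>S'. finite S' \<Longrightarrow> card S' < card S \<Longrightarrow> andre_des_poly S' = andre_poly (card S')"
  shows "andre_des_poly S = (\<Sum>a = 0..card S - 2. of_nat (card S - 2 choose a) *
           ((if a = 0 then 1 else [:0, 1:]) * andre_poly a * andre_poly (card S - 1 - a)))"
proof -
  have "S \<noteq> {}"
    using assms(2) by auto
  then have mM: "Min S \<in> S" "Max S \<in> S"
    using assms(1) by simp_all
  have "Min S \<noteq> Max S"
    using Min_less_Max[OF assms(1,2)] by simp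
  let ?T = "S - {Min S, Max S}"
  have card_T: "card ?T = card S - 2"
    using mM \<open>Min S \<noteq> Max S\<close> assms(1) by (simp add: card_Diff_subset)
  have "(if U = {} then 1 else [:0, 1:]) * andre_des_poly U * andre_des_poly (S - {Min S} - U)
      = (if card U = 0 then 1 else [:0, 1:]) * andre_poly (card U) * andre_poly (card S - 1 - card U)"
    if U: "U \<in> Pow ?T" for U
  proof -
    have "finite U" "card U < card S"
      using U assms(1) mM by (auto intro: finite_subset psubset_card_mono)
    moreover have "card (S - {Min S} - U) = card S - 1 - card U"
      using U assms(1) mM \<open>finite U\<close> by (subst card_Diff_subset) (auto simp: card_Diff_subset)
    moreover have "card (S - {Min S} - U) < card S"
      using calculation assms(2) by linarith
    ultimately show ?thesis
      using assms(1) smaller[of U] smaller[of "S - {Min S} - U"] by simp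
  qed
  then have "andre_des_poly S = (\<Sum>U\<in>Pow ?T. (if card U = 0 then 1 else [:0, 1:])
      * andre_poly (card U) * andre_poly (card S - 1 - card U))"
    by (simp add: andre_des_poly_decomp[OF assms(1,2)])
  also have "\<dots> = (\<Sum>a = 0..card S - 2. of_nat (card S - 2 choose a) *
      ((if a = 0 then 1 else [:0, 1:]) * andre_poly a * andre_poly (card S - 1 - a)))"
    using assms(1) by (subst sum_Pow_card) (simp_all add: card_T mult.assoc)
  finally show ?thesis .
qed

lemma andre_des_poly_eq_andre_poly:
  fixes S :: "nat set"
  assumes "finite S"
  shows "andre_des_poly S = andre_poly (card S)"
  using assms
proof (induction "card S" arbitrary: S rule: less_induct)
  case less
  show ?case
  proof (cases "card S \<le> 1")
    case True
    then show ?thesis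
      using less.prems by (simp add: andre_poly_def andre_des_poly_card_le_1)
  next
    case False
    have IH: "andre_des_poly S' = andre_poly (card S')" if "finite S'" "card S' < card S" for S'
      using less.hyps that by blast
    have "andre_des_poly S = (\<Sum>a = 0..card S - 2. of_nat (card S - 2 choose a) *
        ((if a = 0 then 1 else [:0, 1:]) * andre_poly a * andre_poly (card S - 1 - a)))"
      by (rule andre_des_poly_eq_convolution) (use less.prems False IH in auto)
    also have "\<dots> = andre_des_poly {1..card S}"
      using andre_des_poly_eq_convolution[of "{1..card S}"] False IH by simp
    finally show ?thesis
      by (simp add: andre_poly_def)
  qed
qed

lemma andre_poly_0: "andre_poly 0 = 1" and andre_poly_1: "andre_poly 1 = 1"
  by (simp_all add: andre_poly_def andre_des_poly_card_le_1)

lemma andre_poly_convolution: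
  "andre_poly (N + 2) = (\<Sum>a = 0..N. of_nat (N choose a) *
     ((if a = 0 then 1 else [:0, 1:]) * andre_poly a * andre_poly (N + 1 - a)))"
proof -
  have "andre_poly (N + 2) = andre_des_poly {1..N + 2}"
    by (simp add: andre_poly_def)
  also have "\<dots> = (\<Sum>a = 0..card {1..N + 2} - 2. of_nat (card {1..N + 2} - 2 choose a) *
      ((if a = 0 then 1 else [:0, 1:]) * andre_poly a * andre_poly (card {1..N + 2} - 1 - a)))"
    by (rule andre_des_poly_eq_convolution) (simp_all add: andre_des_poly_eq_andre_poly)
  finally show ?thesis
    by simp
qed

lemma sum_choose_Suc_shift:
  "(\<Sum>a = 0..Suc N. of_nat (Suc N choose a) * f a)
     = (\<Sum>a = 0..N. of_nat (N choose a) * (f a + f (Suc a)) :: 'a::comm_semiring_1)"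
proof -
  have low: "(\<Sum>a = 0..N. of_nat (N choose a) * f a) = f 0 + (\<Sum>a = 0..N. of_nat (N choose Suc a) * f (Suc a))"
  proof -
    have "(\<Sum>a = 0..N. of_nat (N choose a) * f a) = (\<Sum>a = 0..Suc N. of_nat (N choose a) * f a)"
      by (simp add: binomial_eq_0)
    also have "\<dots> = f 0 + (\<Sum>a = 0..N. of_nat (N choose Suc a) * f (Suc a))"
      by (subst sum.atLeast0_atMost_Suc_shift) simp
    finally show ?thesis .
  qed
  have "(\<Sum>a = 0..Suc N. of_nat (Suc N choose a) * f a) = f 0 + (\<Sum>a = 0..N. of_nat (Suc N choose Suc a) * f (Suc a))"
    by (subst sum.atLeast0_atMost_Suc_shift) simp
  also have "\<dots> = f 0 + (\<Sum>a = 0..N. of_nat (N choose Suc a) * f (Suc a)) + (\<Sum>a = 0..N. of_nat (N choose a) * f (Suc a))"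
    by (simp add: sum.distrib distrib_right add_ac)
  also have "\<dots> = (\<Sum>a = 0..N. of_nat (N choose a) * (f a + f (Suc a)))"
    by (simp add: low[symmetric] sum.distrib distrib_left)
  finally show ?thesis .
qed

definition andre_op :: "nat \<Rightarrow> real poly \<Rightarrow> real poly" where
  "andre_op k = diff_op ([:0, 1:] - 2 * [:0, 1:]\<^sup>2) (1 + (of_nat k - 1) * [:0, 1:])"

lemma andre_op_Suc: "andre_op (Suc k) f = andre_op k f + [:0, 1:] * f"
  by (simp add: andre_op_def diff_op_def algebra_simps)

lemma andre_op_X_mult:
  "andre_op (a + b + 1) ([:0, 1:] * f * g) = [:0, 1:] * (andre_op a f * g + f * andre_op b g)"
proof -
  have ring_identity: "(X - 2 * X\<^sup>2) * (X * f * dg + g * (X * df + f)) + (1 + (of_nat (a + b + 1) - 1) * X) * (X * f * g)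
      = X * (((X - 2 * X\<^sup>2) * df + (1 + (of_nat a - 1) * X) * f) * g
           + f * ((X - 2 * X\<^sup>2) * dg + (1 + (of_nat b - 1) * X) * g))" for X f g df dg :: "real poly"
    by (simp add: power2_eq_square algebra_simps)
  have "pderiv ([:0, 1:] * f * g) = [:0, 1:] * f * pderiv g + g * ([:0, 1:] * pderiv f + f)"
    by (simp only: pderiv_mult pderiv_X mult_1_right)
  then show ?thesis
    unfolding andre_op_def diff_op_def by (simp only: ring_identity)
qed

lemma andre_op_convolution_term:
  fixes A :: "nat \<Rightarrow> real poly"
  assumes A0: "A 0 = 1" and A1: "A 1 = 1" and "a \<le> N"
    and below: "\<And>k. 1 \<le> k \<Longrightarrow> k \<le> N + 1 \<Longrightarrow> A (Suc k) = andre_op k (A k)"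
  defines "f \<equiv> \<lambda>a. (if a = 0 then 1 else [:0, 1:]) * A a * A (N + 2 - a)"
  shows "andre_op (N + 2) ((if a = 0 then 1 else [:0, 1:]) * A a * A (N + 1 - a)) = f a + f (Suc a)"
proof (cases "a = 0")
  case True
  have "andre_op (N + 2) (A (N + 1)) = andre_op (N + 1) (A (N + 1)) + [:0, 1:] * A (N + 1)"
    using andre_op_Suc[of "N + 1"] by simp
  also have "andre_op (N + 1) (A (N + 1)) = A (N + 2)"
    using below[of "N + 1"] by simp
  finally show ?thesis
    using True A0 A1 by (simp add: f_def)
next
  case False
  have "andre_op (N + 2) ([:0, 1:] * A a * A (N + 1 - a))
      = [:0, 1:] * (andre_op a (A a) * A (N + 1 - a) + A a * andre_op (N + 1 - a) (A (N + 1 - a)))"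
    using andre_op_X_mult[of a "N + 1 - a"] \<open>a \<le> N\<close> by simp
  also have "andre_op a (A a) = A (Suc a)"
    using below[of a] False \<open>a \<le> N\<close> by simp
  also have "andre_op (N + 1 - a) (A (N + 1 - a)) = A (N + 2 - a)"
    using below[of "N + 1 - a"] False \<open>a \<le> N\<close> by (simp add: Suc_diff_le)
  finally show ?thesis
    using False by (simp add: f_def algebra_simps)
qed

lemma andre_op_convolution:
  fixes A :: "nat \<Rightarrow> real poly"
  assumes A0: "A 0 = 1" and A1: "A 1 = 1"
    and conv: "\<And>N. A (N + 2) = (\<Sum>a = 0..N. of_nat (N choose a) *
                 ((if a = 0 then 1 else [:0, 1:]) * A a * A (N + 1 - a)))"
  shows "1 \<le> n \<Longrightarrow> A (Suc n) = andre_op n (A n)"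
proof (induction n rule: less_induct)
  case (less n)
  show ?case
  proof (cases "n = 1")
    case True
    then show ?thesis
      using conv[of 0] A0 A1 by (simp add: andre_op_def diff_op_def)
  next
    case False
    define N where "N = n - 2"
    with less.prems False have n: "n = N + 2"
      by simp
    define f where "f a = (if a = 0 then 1 else [:0, 1:]) * A a * A (N + 2 - a)" for a
    have below: "A (Suc k) = andre_op k (A k)" if "1 \<le> k" "k \<le> N + 1" for k
      using less.IH[of k] that n by simp
    have "A (Suc n) = (\<Sum>a = 0..Suc N. of_nat (Suc N choose a) * f a)"
      using conv[of "Suc N"] by (simp add: n f_def)
    also have "\<dots> = (\<Sum>a = 0..N. of_nat (N choose a) * (f a + f (Suc a)))"
      by (rule sum_choose_Suc_shift)
    also have "\<dots> = (\<Sum>a = 0..N. of_nat (N choose a) *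
        andre_op n ((if a = 0 then 1 else [:0, 1:]) * A a * A (N + 1 - a)))"
      using andre_op_convolution_term[where N = N, OF A0 A1 _ below, folded f_def]
      by (intro sum.cong refl) (simp add: n)
    also have "\<dots> = andre_op n (A n)"
      using conv[of N] by (simp add: n andre_op_def diff_op_sum diff_op_of_nat_mult)
    finally show ?thesis .
  qed
qed

lemma andre_poly_Suc: "1 \<le> n \<Longrightarrow> andre_poly (Suc n) = andre_op n (andre_poly n)"
  by (rule andre_op_convolution[OF andre_poly_0 andre_poly_1 andre_poly_convolution])

lemma andre_perms_atLeastAtMost: "2 \<le> n \<Longrightarrow> andre_perms {1..n} = {p \<in> perms n. andre p}"
  by (auto simp: andre_perms_def perms_def length_perms[unfolded perms_def])

lemma d_eq_coeff: "2 \<le> n \<Longrightarrow> real (d n i) = coeff (andre_poly n) i"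
proof -
  assume "2 \<le> n"
  then have "coeff (andre_poly n) i = (\<Sum>p\<in>{p \<in> perms n. andre p}. if des p = i then 1 else 0)"
    unfolding andre_poly_def andre_des_poly_def andre_perms_atLeastAtMost[OF \<open>2 \<le> n\<close>]
    by (simp add: coeff_sum monom_altdef[of 1, simplified, symmetric])
  also have "\<dots> = real (card ({p \<in> perms n. andre p} \<inter> {p. des p = i}))"
    by (simp add: sum.If_cases)
  also have "{p \<in> perms n. andre p} \<inter> {p. des p = i} = {p \<in> perms n. andre p \<and> des p = i}"
    by auto
  finally show ?thesis
    by (simp add: d_def)
qed

lemma coeff_andre_op_0: "coeff (andre_op k f) 0 = coeff f 0"
  by (simp add: andre_op_def diff_op_def power2_eq_square distrib_right)

lemma coeff_andre_op_Suc:
  "coeff (andre_op k f) (Suc i) = (of_nat i + 2) * coeff f (Suc i) + (of_nat k - 1 - 2 * of_nat i) * coeff f i"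
  by (cases i) (simp_all add: andre_op_def diff_op_def power2_eq_square coeff_pderiv of_nat_poly numeral_poly algebra_simps)

lemma andre_poly_2: "andre_poly 2 = 1"
  using andre_poly_convolution[of 0] andre_poly_0 andre_poly_1 by (simp add: numeral_2_eq_2)

lemma d_2: "d 2 i = (if i = 0 then 1 else 0)"
  using d_eq_coeff[of 2 i] by (cases "i = 0") (simp_all add: andre_poly_2)

lemma d_Suc_0: "2 \<le> n \<Longrightarrow> d (Suc n) 0 = d n 0"
  using d_eq_coeff[of n 0] d_eq_coeff[of "Suc n" 0] by (simp add: andre_poly_Suc coeff_andre_op_0)

lemma d_Suc_Suc:
  assumes "2 \<le> n"
  shows "(of_nat (d (Suc n) (Suc j)) :: 'a::comm_ring_1)
           = (of_nat j + 2) * of_nat (d n (Suc j)) + (of_nat n - 1 - 2 * of_nat j) * of_nat (d n j)"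
proof -
  have "real_of_int (int (d (Suc n) (Suc j)))
      = real_of_int ((int j + 2) * int (d n (Suc j)) + (int n - 1 - 2 * int j) * int (d n j))"
    using assms d_eq_coeff[of n j] d_eq_coeff[of n "Suc j"] d_eq_coeff[of "Suc n" "Suc j"]
    by (simp add: andre_poly_Suc coeff_andre_op_Suc)
  then have "of_int (int (d (Suc n) (Suc j)))
      = (of_int ((int j + 2) * int (d n (Suc j)) + (int n - 1 - 2 * int j) * int (d n j)) :: 'a)"
    by (simp only: of_int_eq_iff)
  then show ?thesis
    by simp
qed

lemma d_eq_0: "2 \<le> n \<Longrightarrow> n \<le> 2 * i \<Longrightarrow> d n i = 0"
proof (induction n arbitrary: i rule: dec_induct)
  case base
  then show ?case by (simp add: d_2)
next
  case (step n)
  then obtain j where j: "i = Suc j"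
    by (cases i) auto
  have "d n (Suc j) = 0"
    using step.IH[of "Suc j"] step.prems j by simp
  moreover have "n = 2 * j + 1 \<or> d n j = 0"
    using step.IH[of j] step.prems j by (cases "n \<le> 2 * j") auto
  ultimately have "real (d (Suc n) (Suc j)) = 0"
    using d_Suc_Suc[where 'a = real and j = j, OF step.hyps(1)] by auto
  then show ?case
    using j by simp
qed

section \<open>The expansion of the run polynomial\<close>

lemma X_mult_pderiv_X_power: "[:0, 1:] * pderiv ([:0, 1:] ^ j) = of_nat j * ([:0, 1:] ^ j :: 'a::idom poly)"
  by (cases j) (simp_all only: pderiv_X_power, simp_all add: algebra_simps)

lemma one_plus_X_mult_pderiv_power:
  "(1 + [:0, 1:]) * pderiv ((1 + [:0, 1:]) ^ k) = of_nat k * ((1 + [:0, 1:]) ^ k :: 'a::idom poly)"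
proof (cases k)
  case (Suc k')
  have "Y * smult (of_nat (Suc k')) (Y ^ k') = of_nat (Suc k') * Y ^ Suc k'" for Y :: "'a poly"
    by (simp add: of_nat_poly)
  then show ?thesis
    unfolding Suc by (simp only: pderiv_power_Suc pderiv_add pderiv_1 pderiv_X add_0_left mult_1_right)
qed simp

lemma run_op_X_power_one_plus_X_power:
  "run_op (i + 2 + k) ([:0, 1:] ^ (i + 1) * (1 + [:0, 1:]) ^ k)
     = of_nat (i + 1) * ([:0, 1:] ^ (i + 1) * (1 + [:0, 1:]) ^ (k + 1))
       + (of_nat k + 1 - of_nat i) * ([:0, 1:] ^ (i + 2) * (1 + [:0, 1:]) ^ k)"
proof -
  let ?X = "[:0, 1:] :: real poly"
  define P Q where "P = ?X ^ (i + 1)" and "Q = (1 + ?X) ^ k"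
  have regroup: "(X - X ^ 3) * (P * dQ + Q * dP) = X * (1 - X) * P * ((1 + X) * dQ) + (1 - X) * (1 + X) * Q * (X * dP)"
    for X P Q dP dQ :: "real poly"
    by (simp add: power3_eq_cube algebra_simps)
  have collect: "X * (1 - X) * P * (of_nat k * Q) + (1 - X) * (1 + X) * Q * (of_nat (i + 1) * P)
        + (2 * X + (of_nat (i + 2 + k) - 1) * X\<^sup>2) * (P * Q)
      = of_nat (i + 1) * (P * ((1 + X) * Q)) + (of_nat k + 1 - of_nat i) * (X * P * Q)"
    for X P Q :: "real poly"
    by (simp add: power2_eq_square algebra_simps)
  have "run_op (i + 2 + k) (P * Q) = (?X - ?X ^ 3) * (P * pderiv Q + Q * pderiv P)
      + (2 * ?X + (of_nat (i + 2 + k) - 1) * ?X\<^sup>2) * (P * Q)"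
    by (simp only: run_op_def diff_op_def pderiv_mult)
  also have "\<dots> = ?X * (1 - ?X) * P * (of_nat k * Q) + (1 - ?X) * (1 + ?X) * Q * (of_nat (i + 1) * P)
      + (2 * ?X + (of_nat (i + 2 + k) - 1) * ?X\<^sup>2) * (P * Q)"
    unfolding regroup P_def Q_def X_mult_pderiv_X_power one_plus_X_mult_pderiv_power ..
  also have "\<dots> = of_nat (i + 1) * (P * ((1 + ?X) * Q)) + (of_nat k + 1 - of_nat i) * (?X * P * Q)"
    by (rule collect)
  finally show ?thesis
    by (simp only: P_def Q_def mult.assoc power_Suc[symmetric] Suc_eq_plus1 add.assoc one_add_one)
qed

definition expansion_basis :: "nat \<Rightarrow> nat \<Rightarrow> real poly" where
  "expansion_basis n i = [:0, 1:] ^ (i + 1) * (1 + [:0, 1:]) ^ (n - 2 - i)"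

lemma run_op_expansion_basis:
  assumes "2 \<le> n" "i \<le> n - 2"
  shows "run_op n (expansion_basis n i)
           = of_nat (i + 1) * expansion_basis (Suc n) i
             + (of_nat n - 1 - 2 * of_nat i) * expansion_basis (Suc n) (Suc i)"
proof -
  have "i + 2 + (n - 2 - i) = n" "n - 2 - i + 1 = Suc n - 2 - i" "i + 2 = Suc i + 1"
    "n - 2 - i = Suc n - 2 - Suc i" "(of_nat (n - 2 - i) + 1 - of_nat i :: real poly) = of_nat n - 1 - 2 * of_nat i"
    using assms by auto
  then show ?thesis
    using run_op_X_power_one_plus_X_power[of i "n - 2 - i"] unfolding expansion_basis_def by (simp only:)
qed

text \<open>Summing up to \<open>n - 2\<close> instead of \<open>(n - 1) div 2\<close> makes the recurrence uniform;
  the additional coefficients vanish by \<open>d_eq_0\<close>.\<close>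

definition run_expansion :: "nat \<Rightarrow> real poly" where
  "run_expansion n = (\<Sum>i = 0..n - 2. of_nat (2 * d n i) * expansion_basis n i)"

lemma poly_run_expansion:
  "poly (run_expansion n) x = 2 * (\<Sum>i = 0..n - 2. real (d n i) * x ^ (i + 1) * (1 + x) ^ (n - 2 - i))"
  by (simp add: run_expansion_def expansion_basis_def poly_sum sum_distrib_left mult_ac)

lemma run_expansion_Suc:
  assumes "2 \<le> n"
  shows "run_expansion (Suc n) = run_op n (run_expansion n)"
proof -
  define b where "b = expansion_basis (Suc n)"
  define F1 where "F1 i = of_nat (2 * (i + 1) * d n i) * b i" for i
  define F2 where "F2 i = (of_nat n - 1 - 2 * of_nat i) * of_nat (2 * d n i) * b (Suc i)" for i
  have n: "n - 1 = Suc (n - 2)" "Suc n - 2 = Suc (n - 2)"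
    using assms by simp_all
  have "run_op n (run_expansion n) = (\<Sum>i = 0..n - 2. of_nat (2 * d n i) * run_op n (expansion_basis n i))"
    by (simp only: run_expansion_def run_op_sum run_op_of_nat_mult)
  also have "\<dots> = (\<Sum>i = 0..n - 2. F1 i + F2 i)"
    using assms by (intro sum.cong refl) (simp add: run_op_expansion_basis F1_def F2_def b_def algebra_simps)
  also have "\<dots> = (\<Sum>i = 0..n - 1. F1 i) + (\<Sum>i = 0..n - 2. F2 i)"
  proof -
    have "d n (Suc (n - 2)) = 0"
      using assms by (intro d_eq_0) auto
    then show ?thesis
      unfolding n by (simp add: sum.distrib F1_def)
  qed
  also have "\<dots> = F1 0 + (\<Sum>j = 0..n - 2. F1 (Suc j) + F2 j)"
    by (simp only: n sum.atLeast0_atMost_Suc_shift sum.distrib add.assoc comp_def)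
  also have "\<dots> = of_nat (2 * d (Suc n) 0) * b 0 + (\<Sum>j = 0..n - 2. of_nat (2 * d (Suc n) (Suc j)) * b (Suc j))"
    using assms by (simp add: d_Suc_0 d_Suc_Suc F1_def F2_def algebra_simps)
  also have "\<dots> = run_expansion (Suc n)"
    by (simp only: run_expansion_def b_def n sum.atLeast0_atMost_Suc_shift comp_def)
  finally show ?thesis ..
qed

lemma run_poly_2: "run_poly 2 = run_expansion 2"
proof -
  have "run p = 1" if "p \<in> perms 2" for p
    using length_perms[OF that] by (auto simp: run_eq_Suc_turns numeral_2_eq_2 length_Suc_conv)
  moreover have "card (perms 2) = 2"
    by (simp add: perms_def)
  ultimately show ?thesis
    by (simp add: run_poly_def run_expansion_def expansion_basis_def d_2)
qed

lemma run_poly_eq_run_expansion: "2 \<le> n \<Longrightarrow> run_poly n = run_expansion n"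
proof (induction n rule: dec_induct)
  case base
  then show ?case by (rule run_poly_2)
next
  case (step n)
  then show ?case by (simp add: run_poly_Suc run_expansion_Suc)
qed

lemma sum_d_upto_half:
  assumes "2 \<le> n"
  shows "(\<Sum>i = 0..n - 2. real (d n i) * f i) = (\<Sum>i = 0..(n - 1) div 2. real (d n i) * f i)"
proof (rule sum.mono_neutral_right)
  show "\<forall>i\<in>{0..n - 2} - {0..(n - 1) div 2}. real (d n i) * f i = 0"
    using assms by (auto intro: d_eq_0)
qed (use assms in auto)

lemma R_eq_expansion:
  assumes "2 \<le> n"
  shows "R n x = 2 * (\<Sum>i = 0..(n - 1) div 2. real (d n i) * x ^ (i + 1) * (1 + x) ^ (n - 2 - i))"
  using assms sum_d_upto_half[of n "\<lambda>i. x ^ (i + 1) * (1 + x) ^ (n - 2 - i)"]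
  by (simp add: poly_run_poly[symmetric] run_poly_eq_run_expansion poly_run_expansion mult.assoc)

lemma D_eq_expansion:
  fixes x :: real
  assumes "2 \<le> n" "1 + x \<noteq> 0"
  shows "(1 + x) ^ (n - 1) * D n (x / (1 + x))
           = (\<Sum>i = 0..(n - 1) div 2. real (d n i) * x ^ (i + 1) * (1 + x) ^ (n - 2 - i))"
proof -
  have "(1 + x) ^ (n - 1) * (x / (1 + x)) ^ (i + 1) = x ^ (i + 1) * (1 + x) ^ (n - 2 - i)"
    if "i \<in> {0..(n - 1) div 2}" for i
  proof -
    have "n - 1 = (i + 1) + (n - 2 - i)"
      using that assms(1) by auto
    then have "(1 + x) ^ (n - 1) * (x / (1 + x)) ^ (i + 1) = ((1 + x) * (x / (1 + x))) ^ (i + 1) * (1 + x) ^ (n - 2 - i)"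
      by (simp only: power_add power_mult_distrib mult_ac)
    also have "(1 + x) * (x / (1 + x)) = x"
      using assms(2) by simp
    finally show ?thesis .
  qed
  then show ?thesis
    unfolding D_def sum_distrib_left by (intro sum.cong refl) (simp only: mult.left_commute)
qed

theorem mainTheorem5:
  fixes n :: nat and x :: real
  assumes "n \<ge> 2"
  shows "(x \<noteq> -1 \<longrightarrow> R n x = 2 * (1 + x) ^ (n - 1) * D n (x / (1 + x))) \<and>
         R n x = 2 * (\<Sum>i = 0..(n - 1) div 2. real (d n i) * x ^ (i + 1) * (1 + x) ^ (n - 2 - i))"
proof
  show "x \<noteq> -1 \<longrightarrow> R n x = 2 * (1 + x) ^ (n - 1) * D n (x / (1 + x))"
  proof
    assume "x \<noteq> -1"
    then have "1 + x \<noteq> 0"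
      by (simp add: add_eq_0_iff)
    show "R n x = 2 * (1 + x) ^ (n - 1) * D n (x / (1 + x))"
      using D_eq_expansion[OF assms \<open>1 + x \<noteq> 0\<close>] R_eq_expansion[OF assms, of x]
      by (simp only: mult.assoc)
  qed
  show "R n x = 2 * (\<Sum>i = 0..(n - 1) div 2. real (d n i) * x ^ (i + 1) * (1 + x) ^ (n - 2 - i))"
    using assms by (rule R_eq_expansion)
qed

end
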